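(* Let $n \ge 3$ and let $x_1, \dots, x_n \in \mathbb{R}$ be pairwise distinct, and let $h(\theta) = \prod_{j=1}^n (x_j - \theta)$. Then the maximum likelihood estimate $\hat\theta \in \mathbb{H}$ of the sample $x_1,\dots,x_n$ from the Cauchy distribution is a solution in $\mathbb{H}$ of the equation $$n h(\theta) - (\theta - \overline{\theta})\, h'(\theta) = 0.$$
   Context: $\mathbb{H} = \{\theta\in\mathbb{C}:\Im\theta>0\}$ and $\overline{\theta}$ is the complex conjugate. The Cauchy distribution with parameter $\theta = \mu + i\sigma\in\mathbb{H}$ has density $f(x;\theta) = \frac{\sigma}{\pi}\frac{1}{(x-\mu)^2+\sigma^2}$; the maximum likelihood estimate is the (unique) maximizer over $\mathbb{H}$ of $\prod_{j=1}^n f(x_j;\theta)$. *)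

theory Defs
  imports "HOL-Analysis.Analysis"
begin

definition cauchy_density :: "real \<Rightarrow> complex \<Rightarrow> real" where
  "cauchy_density x \<theta> = (Im \<theta> / pi) * (1 / ((x - Re \<theta>)^2 + (Im \<theta>)^2))"

definition cauchy_likelihood :: "nat \<Rightarrow> (nat \<Rightarrow> real) \<Rightarrow> complex \<Rightarrow> real" where
  "cauchy_likelihood n x \<theta> = (\<Prod>j<n. cauchy_density (x j) \<theta>)"

definition is_cauchy_MLE :: "nat \<Rightarrow> (nat \<Rightarrow> real) \<Rightarrow> complex \<Rightarrow> bool" where
  "is_cauchy_MLE n x \<theta> \<longleftrightarrow> Im \<theta> > 0 \<and>
     (\<forall>\<eta>. Im \<eta> > 0 \<longrightarrow> cauchy_likelihood n x \<eta> \<le> cauchy_likelihood n x \<theta>)"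

end

theory Submission
  imports Defs
begin

text \<open>
  Since \<open>|x\<^sub>j - \<theta>|\<^sup>2 = (x\<^sub>j - \<mu>)\<^sup>2 + \<sigma>\<^sup>2\<close>, the likelihood is \<open>(\<sigma>/\<pi>)\<^sup>n / |h \<theta>|\<^sup>2\<close>, and \<open>h\<close>
  has no zeros in the upper half-plane. Hence \<open>\<eta> \<mapsto> \<sigma>\<^sup>n |h \<eta>|\<^sup>2 - (Im \<eta>)\<^sup>n |h \<theta>|\<^sup>2\<close> is
  minimal at \<open>\<eta> = \<theta>\<close>. Differentiating along the horizontal and the vertical line through \<open>\<theta>\<close>,
  and using that \<open>h\<close> is holomorphic, gives \<open>Re (cnj (h \<theta>) h' \<theta>) = 0\<close> and
  \<open>2 \<sigma> Im (cnj (h \<theta>) h' \<theta>) = -n |h \<theta>|\<^sup>2\<close>. Together they say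
  \<open>cnj (h \<theta>) (n h \<theta> - 2 i \<sigma> h' \<theta>) = 0\<close>, and \<open>\<theta> - cnj \<theta> = 2 i \<sigma>\<close>.
\<close>

lemma has_real_derivative_norm_sq_along_line:
  assumes "(f has_field_derivative D) (at w)"
  shows "((\<lambda>t. (cmod (f (w + of_real t * v)))\<^sup>2) has_real_derivative 2 * Re (cnj (f w) * D * v)) (at 0)"
proof -
  define g where "g t = f (w + of_real t * v)" for t :: real
  have line: "((\<lambda>z. w + z * v) has_field_derivative v) (at 0)"
    by (auto intro!: derivative_eq_intros)
  have "(f has_field_derivative D) (at (w + 0 * v))"
    using assms by simp
  from DERIV_chain2[OF this line]
  have "((\<lambda>z. f (w + z * v)) has_field_derivative D * v) (at 0)" .
  then have g': "(g has_vector_derivative D * v) (at 0)"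
    unfolding g_def by (rule has_vector_derivative_real_field[where a = 0, simplified])
  have "((\<lambda>t. g t * cnj (g t)) has_vector_derivative g 0 * cnj (D * v) + D * v * cnj (g 0)) (at 0)"
    by (rule has_vector_derivative_mult[OF g' has_vector_derivative_cnj[OF g']])
  then have "((\<lambda>t. Re (g t * cnj (g t))) has_real_derivative
      Re (g 0 * cnj (D * v) + D * v * cnj (g 0))) (at 0)"
    by (simp add: has_vector_derivative_complex_iff)
  moreover have "Re (g 0 * cnj (D * v) + D * v * cnj (g 0)) = 2 * Re (cnj (f w) * D * v)"
    unfolding g_def by (simp add: algebra_simps)
  moreover have "Re (g t * cnj (g t)) = (cmod (g t))\<^sup>2" for t
    by (simp add: complex_mult_cnj cmod_power2)
  ultimately show ?thesis
    unfolding g_def by simp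
qed

lemma Im_power_norm_sq_max_Re:
  fixes f :: "complex \<Rightarrow> complex" and m :: nat
  assumes deriv: "(f has_field_derivative f') (at \<theta>)"
    and pos: "Im \<theta> > 0"
    and max: "\<And>\<eta>. Im \<eta> > 0 \<Longrightarrow> (Im \<eta>)^m * (cmod (f \<theta>))\<^sup>2 \<le> (Im \<theta>)^m * (cmod (f \<eta>))\<^sup>2"
  shows "Re (cnj (f \<theta>) * f') = 0"
proof -
  have "2 * Re (cnj (f \<theta>) * f' * 1) = 0"
  proof (rule DERIV_local_min[OF has_real_derivative_norm_sq_along_line[OF deriv]])
    show "\<forall>t. \<bar>0 - t\<bar> < 1 \<longrightarrow> (cmod (f (\<theta> + of_real 0 * 1)))\<^sup>2 \<le> (cmod (f (\<theta> + of_real t * 1)))\<^sup>2"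
    proof (intro allI impI)
      fix t :: real
      have "(Im \<theta>)^m * (cmod (f \<theta>))\<^sup>2 \<le> (Im \<theta>)^m * (cmod (f (\<theta> + of_real t)))\<^sup>2"
        using max[of "\<theta> + of_real t"] pos by simp
      then show "(cmod (f (\<theta> + of_real 0 * 1)))\<^sup>2 \<le> (cmod (f (\<theta> + of_real t * 1)))\<^sup>2"
        using pos by simp
    qed
  qed simp
  then show ?thesis
    by simp
qed

lemma Im_power_norm_sq_max_Im:
  fixes f :: "complex \<Rightarrow> complex" and m :: nat
  assumes deriv: "(f has_field_derivative f') (at \<theta>)"
    and pos: "Im \<theta> > 0"
    and max: "\<And>\<eta>. Im \<eta> > 0 \<Longrightarrow> (Im \<eta>)^m * (cmod (f \<theta>))\<^sup>2 \<le> (Im \<theta>)^m * (cmod (f \<eta>))\<^sup>2"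
  shows "2 * Im \<theta> * Im (cnj (f \<theta>) * f') = - of_nat m * (cmod (f \<theta>))\<^sup>2"
proof -
  define \<sigma> where "\<sigma> = Im \<theta>"
  define k where
    "k t = \<sigma>^m * (cmod (f (\<theta> + of_real t * \<i>)))\<^sup>2 - (cmod (f \<theta>))\<^sup>2 * (\<sigma> + t)^m" for t
  have "((\<lambda>t. (\<sigma> + t)^m) has_real_derivative of_nat m * \<sigma>^(m - 1)) (at 0)"
    by (auto intro!: derivative_eq_intros)
  then have "(k has_real_derivative \<sigma>^m * (2 * Re (cnj (f \<theta>) * f' * \<i>))
      - (cmod (f \<theta>))\<^sup>2 * (of_nat m * \<sigma>^(m - 1))) (at 0)"
    unfolding k_def by (intro DERIV_diff DERIV_cmult has_real_derivative_norm_sq_along_line[OF deriv])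
  moreover have "\<forall>t. \<bar>0 - t\<bar> < \<sigma> \<longrightarrow> k 0 \<le> k t"
  proof (intro allI impI)
    fix t :: real
    assume "\<bar>0 - t\<bar> < \<sigma>"
    then have "(\<sigma> + t)^m * (cmod (f \<theta>))\<^sup>2 \<le> \<sigma>^m * (cmod (f (\<theta> + of_real t * \<i>)))\<^sup>2"
      using max[of "\<theta> + of_real t * \<i>"] by (simp add: \<sigma>_def)
    then show "k 0 \<le> k t"
      by (simp add: k_def algebra_simps)
  qed
  ultimately have
    "\<sigma>^m * (2 * Re (cnj (f \<theta>) * f' * \<i>)) = (cmod (f \<theta>))\<^sup>2 * (of_nat m * \<sigma>^(m - 1))"
    using DERIV_local_min pos \<sigma>_def by fastforce
  then have "\<sigma>^m * (2 * \<sigma> * Re (cnj (f \<theta>) * f' * \<i>)) = \<sigma>^m * (of_nat m * (cmod (f \<theta>))\<^sup>2)"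
    by (cases m) (auto simp: algebra_simps)
  then have "2 * \<sigma> * Re (cnj (f \<theta>) * f' * \<i>) = of_nat m * (cmod (f \<theta>))\<^sup>2"
    using pos by (simp add: \<sigma>_def)
  then show ?thesis
    by (simp add: \<sigma>_def algebra_simps)
qed

lemma Im_power_norm_sq_max_stationary:
  fixes f :: "complex \<Rightarrow> complex" and m :: nat
  assumes deriv: "(f has_field_derivative f') (at \<theta>)"
    and pos: "Im \<theta> > 0"
    and nonzero: "f \<theta> \<noteq> 0"
    and max: "\<And>\<eta>. Im \<eta> > 0 \<Longrightarrow> (Im \<eta>)^m * (cmod (f \<theta>))\<^sup>2 \<le> (Im \<theta>)^m * (cmod (f \<eta>))\<^sup>2"
  shows "of_nat m * f \<theta> - (\<theta> - cnj \<theta>) * f' = 0"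
proof -
  define a where "a = f \<theta>"
  have diff_cnj: "\<theta> - cnj \<theta> = 2 * \<i> * complex_of_real (Im \<theta>)"
    by (simp add: complex_eq_iff)
  have "cnj a * (of_nat m * a - (\<theta> - cnj \<theta>) * f') =
      of_nat m * (a * cnj a) - 2 * \<i> * complex_of_real (Im \<theta>) * (cnj a * f')"
    unfolding diff_cnj by (simp add: algebra_simps)
  also have "\<dots> =
      of_nat m * complex_of_real ((cmod a)\<^sup>2) - 2 * \<i> * complex_of_real (Im \<theta>) * (cnj a * f')"
    by (simp only: complex_norm_square)
  also have "\<dots> = 0"
    using Im_power_norm_sq_max_Re[OF deriv pos max] Im_power_norm_sq_max_Im[OF deriv pos max]
    by (simp add: a_def complex_eq_iff)
  finally show ?thesis
    using nonzero by (simp add: a_def)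
qed

lemma cauchy_likelihood_eq:
  "cauchy_likelihood n x \<eta> = (Im \<eta> / pi)^n / (cmod (\<Prod>j<n. complex_of_real (x j) - \<eta>))\<^sup>2"
proof -
  have "cauchy_density (x j) \<eta> = (Im \<eta> / pi) / (cmod (complex_of_real (x j) - \<eta>))\<^sup>2" for j
    unfolding cauchy_density_def by (simp add: cmod_power2 power2_commute)
  then have "cauchy_likelihood n x \<eta> =
      (\<Prod>j<n. (Im \<eta> / pi) / (cmod (complex_of_real (x j) - \<eta>))\<^sup>2)"
    unfolding cauchy_likelihood_def by simp
  also have "\<dots> = (Im \<eta> / pi)^n / (\<Prod>j<n. cmod (complex_of_real (x j) - \<eta>))\<^sup>2"
    by (simp add: prod_dividef prod_power_distrib power_divide prod.distrib)
  finally show ?thesis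
    by (simp only: prod_norm)
qed

lemma prod_real_minus_nonzero:
  assumes "Im \<eta> \<noteq> 0"
  shows "(\<Prod>j\<in>J. complex_of_real (x j) - \<eta>) \<noteq> 0"
proof -
  have "complex_of_real (x j) - \<eta> \<noteq> 0" for j
    using assms by (auto simp: complex_eq_iff)
  then show ?thesis
    by (cases "finite J") simp_all
qed

theorem mainTheorem5:
  fixes n :: nat and x :: "nat \<Rightarrow> real" and \<theta> :: complex
  assumes "n \<ge> 3"
    and "inj_on x {..<n}"
    and "is_cauchy_MLE n x \<theta>"
  defines "h \<equiv> (\<lambda>z::complex. \<Prod>j<n. (complex_of_real (x j) - z))"
  shows "of_nat n * h \<theta> - (\<theta> - cnj \<theta>) * deriv h \<theta> = 0"
proof (rule Im_power_norm_sq_max_stationary)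
  have "h holomorphic_on UNIV"
    unfolding h_def by (intro holomorphic_intros)
  then show "(h has_field_derivative deriv h \<theta>) (at \<theta>)"
    using holomorphic_derivI by blast
  show pos: "Im \<theta> > 0"
    using assms(3) by (simp add: is_cauchy_MLE_def)
  have nonzero: "h \<eta> \<noteq> 0" if "Im \<eta> > 0" for \<eta>
    unfolding h_def using that by (intro prod_real_minus_nonzero) simp
  then show "h \<theta> \<noteq> 0"
    using pos .
  show "(Im \<eta>)^n * (cmod (h \<theta>))\<^sup>2 \<le> (Im \<theta>)^n * (cmod (h \<eta>))\<^sup>2" if "Im \<eta> > 0" for \<eta>
  proof -
    have "(Im \<eta> / pi)^n / (cmod (h \<eta>))\<^sup>2 \<le> (Im \<theta> / pi)^n / (cmod (h \<theta>))\<^sup>2"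
      using assms(3) that by (simp add: is_cauchy_MLE_def cauchy_likelihood_eq h_def)
    then show ?thesis
      using nonzero[OF that] nonzero[OF pos] by (simp add: power_divide field_simps)
  qed
qed

end
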